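(* Let $(X,\mathcal{A},\mu)$ be a probability space and let $\{E_i\}_{i\in\mathbb{N}}$ be a sequence of sets in $\mathcal{A}$. Suppose there exist constants $C'>0$, $c>0$ and a sequence of finite sets $\mathcal{S}_k\subset\mathbb{Z}$ with $\min\mathcal{S}_k\to+\infty$ as $k\to\infty$ such that for all sufficiently large $k$: $$\sum_{i\in\mathcal{S}_k}\mu(E_i)\ge c\qquad\text{and}\qquad \sum_{\substack{s<t\\ s,t\in\mathcal{S}_k}}\mu(E_s\cap E_t)\le C'\Big(\sum_{i\in\mathcal{S}_k}\mu(E_i)\Big)^2.$$ Suppose in addition that condition (M1) holds. Then $\mu(E_\infty)=1$.
   Context: $E_\infty:=\limsup_{i\to\infty}E_i=\bigcap_{t=1}^\infty\bigcup_{i=t}^\infty E_i$. Condition (M1): for every $\delta>0$ and all natural numbers $q_1<q_2$ there exists $i_0=i_0(q_1,q_2,\delta)$ such that for all $i\ge i_0$, $$\mu(A\cap E_i)\le(1+\delta)\mu(A)\mu(E_i),\qquad\text{where } A=\bigcup_{j=q_1}^{q_2}E_j.$$ *)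

theory Defs
  imports "HOL-Probability.Probability"
begin

definition M1 :: "'a measure \<Rightarrow> (nat \<Rightarrow> 'a set) \<Rightarrow> bool" where
  "M1 M E \<longleftrightarrow>
     (\<forall>\<delta>::real. \<delta> > 0 \<longrightarrow> (\<forall>q1 q2::nat. q1 < q2 \<longrightarrow>
        (\<exists>i0. \<forall>i\<ge>i0.
           measure M ((\<Union>j\<in>{q1..q2}. E j) \<inter> E i)
             \<le> (1 + \<delta>) * measure M (\<Union>j\<in>{q1..q2}. E j) * measure M (E i))))"

definition E_infty :: "(nat \<Rightarrow> 'a set) \<Rightarrow> 'a set" where
  "E_infty E = (\<Inter>t. \<Union>i\<in>{t..}. E i)"

end

theory Submission
  imports Defs
begin

text \<open>Fix a tail \<open>\<Union>i\<ge>t. E i\<close> of measure \<open>m < 1\<close> and an initial piece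
  \<open>A = \<Union>j\<in>{t..q}. E j\<close> of measure close to \<open>m\<close>. By (M1), far enough out every \<open>E i - A\<close>
  keeps a fraction \<open>\<rho> \<approx> 1 - m\<close> of the mass of \<open>E i\<close>. On a block \<open>S k\<close> beyond that point the
  Chung--Erdos inequality, fed with the second-moment hypothesis, shows that these differences
  cover a set of measure at least \<open>\<rho>\<^sup>2 c / (1 + 2 C' c)\<close>; it is disjoint from \<open>A\<close> and lies in
  the tail, which contradicts \<open>\<mu> A \<approx> m\<close>. So all tails have measure one, and hence so does
  their intersection \<open>E_infty E\<close>.\<close>

lemma (in finite_measure) chung_erdos_inequality:
  fixes B :: "'i \<Rightarrow> 'a set"
  assumes "finite I" and B: "\<And>i. i \<in> I \<Longrightarrow> B i \<in> sets M"
  shows "(\<Sum>i\<in>I. measure M (B i))^2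
           \<le> measure M (\<Union>i\<in>I. B i) * (\<Sum>i\<in>I. \<Sum>j\<in>I. measure M (B i \<inter> B j))"
proof -
  define U where "U = (\<Union>i\<in>I. B i)"
  define S1 where "S1 = (\<Sum>i\<in>I. measure M (B i))"
  define S2 where "S2 = (\<Sum>i\<in>I. \<Sum>j\<in>I. measure M (B i \<inter> B j))"
  define u where "u = measure M U"
  define N :: "'a \<Rightarrow> real" where "N x = (\<Sum>i\<in>I. indicator (B i) x)" for x
  have U: "U \<in> sets M" unfolding U_def using assms by auto
  have int_ind: "integrable M (indicator A :: 'a \<Rightarrow> real)" if "A \<in> sets M" for A
    using that by (simp add: emeasure_eq_measure)
  have int_ind_eq: "integral\<^sup>L M (indicator A :: 'a \<Rightarrow> real) = measure M A" if "A \<in> sets M" for A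
    using that by simp
  have quadratic_nonneg: "0 \<le> S2 - 2 * l * S1 + l^2 * u" for l
  proof -
    have expand: "(N x - l * indicator U x)^2 =
        (\<Sum>i\<in>I. \<Sum>j\<in>I. indicator (B i \<inter> B j) x) - 2 * l * N x + l^2 * indicator U x" for x
    proof (cases "x \<in> U")
      case True
      have "(N x)^2 = (\<Sum>i\<in>I. \<Sum>j\<in>I. indicator (B i \<inter> B j) x)"
        unfolding N_def power2_eq_square sum_product indicator_inter_arith by simp
      then show ?thesis using True by (simp add: power2_eq_square algebra_simps)
    next
      case False
      then show ?thesis unfolding N_def U_def by (simp add: indicator_def)
    qed
    have "0 \<le> integral\<^sup>L M (\<lambda>x. (N x - l * indicator U x)^2)"
      by (rule integral_nonneg_AE) auto
    also have "\<dots> = integral\<^sup>L M (\<lambda>x.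
        (\<Sum>i\<in>I. \<Sum>j\<in>I. indicator (B i \<inter> B j) x) - 2 * l * N x + l^2 * indicator U x)"
      by (simp only: expand)
    also have "\<dots> = S2 - 2 * l * S1 + l^2 * u"
      unfolding N_def S1_def S2_def u_def using assms U
      by (simp add: int_ind int_ind_eq integral_sum integrable_sum)
    finally show ?thesis .
  qed
  show ?thesis
  proof (cases "u = 0")
    case True
    have "measure M (B i) = 0" if "i \<in> I" for i
      using finite_measure_mono[of "B i" U] that U True unfolding U_def u_def
      by (auto simp: measure_le_0_iff)
    then show ?thesis by (simp add: sum_nonneg)
  next
    case False
    then have "u > 0" unfolding u_def using measure_nonneg[of M U] by linarith
    with quadratic_nonneg[of "S1 / u"] show ?thesis
      unfolding S1_def[symmetric] S2_def[symmetric] U_def[symmetric] u_def[symmetric]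
      by (simp add: power2_eq_square field_simps)
  qed
qed

lemma sum_sum_symmetric_eq_diag_plus_pairs:
  fixes f :: "'i::linorder \<Rightarrow> 'i \<Rightarrow> real"
  assumes "finite I" and sym: "\<And>i j. f i j = f j i"
  shows "(\<Sum>i\<in>I. \<Sum>j\<in>I. f i j)
           = (\<Sum>i\<in>I. f i i) + 2 * (\<Sum>(s, t)\<in>{(s, t). s \<in> I \<and> t \<in> I \<and> s < t}. f s t)"
proof -
  define D where "D = (\<lambda>i. (i, i)) ` I"
  define L where "L = {(s, t). s \<in> I \<and> t \<in> I \<and> s < t}"
  have finite: "finite D" "finite L" "finite (prod.swap ` L)"
    using assms(1) by (auto intro: finite_subset[of _ "I \<times> I"] simp: D_def L_def)
  have "I \<times> I = D \<union> (L \<union> prod.swap ` L)"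
    unfolding D_def L_def by (auto simp: image_iff)
  then have "(\<Sum>i\<in>I. \<Sum>j\<in>I. f i j) = (\<Sum>(i, j)\<in>D \<union> (L \<union> prod.swap ` L). f i j)"
    by (simp add: sum.cartesian_product)
  also have "\<dots> = (\<Sum>(i, j)\<in>D. f i j) + ((\<Sum>(i, j)\<in>L. f i j) + (\<Sum>(i, j)\<in>prod.swap ` L. f i j))"
    using finite by (subst sum.union_disjoint; auto simp: D_def L_def sum.union_disjoint)+
  also have "(\<Sum>(i, j)\<in>D. f i j) = (\<Sum>i\<in>I. f i i)"
    unfolding D_def by (subst sum.reindex) (auto simp: inj_on_def)
  also have "(\<Sum>(i, j)\<in>prod.swap ` L. f i j) = (\<Sum>(i, j)\<in>L. f i j)"
    by (subst sum.reindex) (auto simp: inj_on_def sym intro!: sum.cong)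
  finally show ?thesis unfolding L_def by simp
qed

lemma (in finite_measure) chung_erdos_inequality_pairs:
  fixes B :: "'i::linorder \<Rightarrow> 'a set"
  assumes "finite I" and "\<And>i. i \<in> I \<Longrightarrow> B i \<in> sets M"
  shows "(\<Sum>i\<in>I. measure M (B i))^2
           \<le> measure M (\<Union>i\<in>I. B i) * ((\<Sum>i\<in>I. measure M (B i))
               + 2 * (\<Sum>(s, t)\<in>{(s, t). s \<in> I \<and> t \<in> I \<and> s < t}. measure M (B s \<inter> B t)))"
  using chung_erdos_inequality[of I B, OF assms]
    sum_sum_symmetric_eq_diag_plus_pairs[OF assms(1), of "\<lambda>i j. measure M (B i \<inter> B j)"]
  by (simp add: Int_commute)

lemma divide_one_plus_mono:
  fixes a x y :: real
  assumes "0 \<le> a" "0 \<le> x" "x \<le> y"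
  shows "x / (1 + a * x) \<le> y / (1 + a * y)"
proof -
  have "x * (1 + a * y) \<le> y * (1 + a * x)"
    using assms by (simp add: algebra_simps)
  then show ?thesis
    using assms by (simp add: divide_simps add_pos_nonneg)
qed

lemma (in finite_measure) measure_UN_ge_second_moment:
  fixes E B :: "'i::linorder \<Rightarrow> 'a set"
  assumes "finite I"
    and E: "\<And>i. i \<in> I \<Longrightarrow> E i \<in> sets M" and B: "\<And>i. i \<in> I \<Longrightarrow> B i \<in> sets M"
    and B_sub: "\<And>i. i \<in> I \<Longrightarrow> B i \<subseteq> E i"
    and "0 \<le> \<rho>" and B_large: "\<And>i. i \<in> I \<Longrightarrow> \<rho> * measure M (E i) \<le> measure M (B i)"
    and "0 < c" and "0 \<le> C'"
    and mass: "c \<le> (\<Sum>i\<in>I. measure M (E i))"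
    and pairs: "(\<Sum>(s, t)\<in>{(s, t). s \<in> I \<and> t \<in> I \<and> s < t}. measure M (E s \<inter> E t))
                  \<le> C' * (\<Sum>i\<in>I. measure M (E i))^2"
  shows "\<rho>^2 * (c / (1 + 2 * C' * c)) \<le> measure M (\<Union>i\<in>I. B i)"
proof -
  define \<sigma> where "\<sigma> = (\<Sum>i\<in>I. measure M (E i))"
  define u where "u = measure M (\<Union>i\<in>I. B i)"
  have "\<sigma> > 0" using mass \<open>0 < c\<close> unfolding \<sigma>_def by linarith
  have B_le_E: "measure M (B i) \<le> measure M (E i)" if "i \<in> I" for i
    using that E B_sub by (intro finite_measure_mono)
  have "(\<rho> * \<sigma>)^2 \<le> (\<Sum>i\<in>I. measure M (B i))^2"
    using \<open>0 \<le> \<rho>\<close> \<open>\<sigma> > 0\<close> B_large unfolding \<sigma>_def sum_distrib_left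
    by (intro power_mono sum_mono) (auto intro!: sum_nonneg)
  also have "\<dots> \<le> u * ((\<Sum>i\<in>I. measure M (B i))
      + 2 * (\<Sum>(s, t)\<in>{(s, t). s \<in> I \<and> t \<in> I \<and> s < t}. measure M (B s \<inter> B t)))"
    unfolding u_def using \<open>finite I\<close> B by (rule chung_erdos_inequality_pairs)
  also have "\<dots> \<le> u * (\<sigma> + 2 * (C' * \<sigma>^2))"
  proof -
    have "(\<Sum>(s, t)\<in>{(s, t). s \<in> I \<and> t \<in> I \<and> s < t}. measure M (B s \<inter> B t))
        \<le> (\<Sum>(s, t)\<in>{(s, t). s \<in> I \<and> t \<in> I \<and> s < t}. measure M (E s \<inter> E t))"
      using E B_sub by (intro sum_mono) (auto intro!: finite_measure_mono)
    moreover have "(\<Sum>i\<in>I. measure M (B i)) \<le> \<sigma>"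
      unfolding \<sigma>_def using B_le_E by (rule sum_mono)
    ultimately show ?thesis
      using pairs unfolding \<sigma>_def[symmetric] u_def by (intro mult_left_mono) auto
  qed
  finally have "\<sigma> * (\<rho>^2 * \<sigma>) \<le> \<sigma> * (u * (1 + 2 * C' * \<sigma>))"
    by (simp add: power2_eq_square algebra_simps)
  then have "\<rho>^2 * \<sigma> \<le> u * (1 + 2 * C' * \<sigma>)"
    using \<open>\<sigma> > 0\<close> by simp
  then have "\<rho>^2 * (\<sigma> / (1 + 2 * C' * \<sigma>)) \<le> u"
    using \<open>\<sigma> > 0\<close> \<open>0 \<le> C'\<close> by (simp add: field_simps add_pos_nonneg)
  moreover have "c / (1 + 2 * C' * c) \<le> \<sigma> / (1 + 2 * C' * \<sigma>)"
    using divide_one_plus_mono[of "2 * C'" c \<sigma>] \<open>0 \<le> C'\<close> \<open>0 < c\<close> mass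
    unfolding \<sigma>_def by (simp add: mult.assoc)
  ultimately show ?thesis
    unfolding u_def by (meson dual_order.trans mult_left_mono zero_le_power2)
qed

locale blockwise_second_moment = prob_space M
  for M :: "'a measure" and E :: "nat \<Rightarrow> 'a set" and S :: "nat \<Rightarrow> nat set" and C' c :: real +
  assumes sets_E: "\<And>i. E i \<in> sets M"
    and C'_pos: "C' > 0" and c_pos: "c > 0"
    and finite_S: "\<And>k. finite (S k)"
    and Min_S_tendsto: "filterlim (\<lambda>k. Min (S k)) at_top sequentially"
    and second_moment: "eventually (\<lambda>k. (\<Sum>i\<in>S k. measure M (E i)) \<ge> c
            \<and> (\<Sum>(s, t)\<in>{(s, t). s \<in> S k \<and> t \<in> S k \<and> s < t}. measure M (E s \<inter> E t))
                \<le> C' * (\<Sum>i\<in>S k. measure M (E i))^2) sequentially"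
    and quasi_independent: "M1 M E"
begin

lemma obtain_block_beyond:
  obtains k where "n \<le> Min (S k)" and "c \<le> (\<Sum>i\<in>S k. measure M (E i))"
    and "(\<Sum>(s, t)\<in>{(s, t). s \<in> S k \<and> t \<in> S k \<and> s < t}. measure M (E s \<inter> E t))
           \<le> C' * (\<Sum>i\<in>S k. measure M (E i))^2"
proof -
  have "eventually (\<lambda>k. n \<le> Min (S k)) sequentially"
    using Min_S_tendsto by (simp add: filterlim_at_top)
  from eventually_happens'[OF _ eventually_conj[OF this second_moment]] that show ?thesis
    by auto
qed

lemma measure_tail_ge_initial_plus_gain:
  assumes "t < q" and "0 < \<delta>" and "0 \<le> \<rho>"
    and \<rho>_le: "\<rho> \<le> 1 - (1 + \<delta>) * measure M (\<Union>j\<in>{t..q}. E j)"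
  shows "measure M (\<Union>j\<in>{t..q}. E j) + \<rho>^2 * (c / (1 + 2 * C' * c))
           \<le> measure M (\<Union>i\<in>{t..}. E i)"
proof -
  define A where "A = (\<Union>j\<in>{t..q}. E j)"
  have A: "A \<in> sets M" unfolding A_def using sets_E by auto
  obtain i0 where i0: "\<And>i. i \<ge> i0 \<Longrightarrow> measure M (A \<inter> E i) \<le> (1 + \<delta>) * measure M A * measure M (E i)"
    using quasi_independent \<open>t < q\<close> \<open>0 < \<delta>\<close> unfolding M1_def A_def by blast
  obtain k where k_far: "max i0 t \<le> Min (S k)" and mass: "c \<le> (\<Sum>i\<in>S k. measure M (E i))"
    and pairs: "(\<Sum>(s, t)\<in>{(s, t). s \<in> S k \<and> t \<in> S k \<and> s < t}. measure M (E s \<inter> E t))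
                  \<le> C' * (\<Sum>i\<in>S k. measure M (E i))^2"
    by (rule obtain_block_beyond)
  have far: "i0 \<le> i \<and> t \<le> i" if "i \<in> S k" for i
    using Min_le[OF finite_S that] k_far by auto
  define B where "B i = E i - A" for i
  have B: "B i \<in> sets M" for i unfolding B_def using sets_E A by auto
  have B_large: "\<rho> * measure M (E i) \<le> measure M (B i)" if "i \<in> S k" for i
  proof -
    have "\<rho> * measure M (E i) \<le> measure M (E i) - (1 + \<delta>) * measure M A * measure M (E i)"
      using mult_right_mono[OF \<rho>_le measure_nonneg[of M "E i"]] unfolding A_def[symmetric]
      by (simp add: algebra_simps)
    also have "\<dots> \<le> measure M (E i) - measure M (E i \<inter> A)"
      using i0 far[OF that] by (simp add: Int_commute)
    also have "\<dots> = measure M (B i)"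
      unfolding B_def using sets_E A by (rule finite_measure_Diff'[symmetric])
    finally show ?thesis .
  qed
  have gain: "\<rho>^2 * (c / (1 + 2 * C' * c)) \<le> measure M (\<Union>i\<in>S k. B i)"
    using finite_S sets_E B _ \<open>0 \<le> \<rho>\<close> B_large c_pos _ mass pairs
    by (rule measure_UN_ge_second_moment) (use C'_pos in \<open>auto simp: B_def\<close>)
  have UB: "(\<Union>i\<in>S k. B i) \<in> sets M" using B finite_S by auto
  have "measure M A + measure M (\<Union>i\<in>S k. B i) = measure M (A \<union> (\<Union>i\<in>S k. B i))"
    using A UB by (subst finite_measure_Union) (auto simp: B_def)
  also have "\<dots> \<le> measure M (\<Union>i\<in>{t..}. E i)"
    using A UB sets_E far unfolding A_def B_def by (intro finite_measure_mono) auto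
  finally show ?thesis
    using gain unfolding A_def by linarith
qed

lemma prob_tail_eq_1: "prob (\<Union>i\<in>{t..}. E i) = 1"
proof (rule ccontr)
  define m where "m = prob (\<Union>i\<in>{t..}. E i)"
  assume "prob (\<Union>i\<in>{t..}. E i) \<noteq> 1"
  then have "m < 1" using prob_le_1 unfolding m_def by (simp add: order_less_le)
  define \<delta> where "\<delta> = (1 - m) / 2"
  define \<gamma> where "\<gamma> = \<delta>^2 * (c / (1 + 2 * C' * c))"
  have "0 < \<delta>" using \<open>m < 1\<close> unfolding \<delta>_def by simp
  then have "0 < \<gamma>" using C'_pos c_pos unfolding \<gamma>_def by (simp add: add_pos_pos)
  have tail: "(\<Union>i\<in>{t..}. E i) \<in> events" using sets_E by auto
  have initial_le: "prob (\<Union>j\<in>{t..q}. E j) \<le> m - \<gamma>" if "t < q" for q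
  proof -
    have "prob (\<Union>j\<in>{t..q}. E j) \<le> m"
      unfolding m_def using sets_E tail by (intro finite_measure_mono) auto
    then have "(1 + \<delta>) * prob (\<Union>j\<in>{t..q}. E j) \<le> (1 + \<delta>) * m"
      using \<open>0 < \<delta>\<close> by (intro mult_left_mono) auto
    moreover have "1 - (1 + \<delta>) * m = \<delta> + \<delta> * (1 - m)"
      unfolding \<delta>_def by (simp add: field_simps)
    moreover have "0 \<le> \<delta> * (1 - m)"
      using \<open>0 < \<delta>\<close> \<open>m < 1\<close> by simp
    ultimately have "\<delta> \<le> 1 - (1 + \<delta>) * prob (\<Union>j\<in>{t..q}. E j)"
      by linarith
    from measure_tail_ge_initial_plus_gain[OF that \<open>0 < \<delta>\<close> _ this] \<open>0 < \<delta>\<close>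
    show ?thesis unfolding \<gamma>_def m_def by simp
  qed
  have "(\<Union>q. \<Union>j\<in>{t..q}. E j) = (\<Union>i\<in>{t..}. E i)"
    by (auto simp: atLeast_iff) (meson atLeastAtMost_iff order_refl)
  then have "(\<lambda>q. prob (\<Union>j\<in>{t..q}. E j)) \<longlonglongrightarrow> m"
    using finite_Lim_measure_incseq[of "\<lambda>q. \<Union>j\<in>{t..q}. E j"] sets_E
    unfolding m_def by (force simp: incseq_def)
  then have "eventually (\<lambda>q. m - \<gamma> < prob (\<Union>j\<in>{t..q}. E j)) sequentially"
    using \<open>0 < \<gamma>\<close> by (intro order_tendstoD) auto
  moreover have "eventually (\<lambda>q. t < q) sequentially"
    by (rule eventually_gt_at_top)
  ultimately have "eventually (\<lambda>q. m - \<gamma> < prob (\<Union>j\<in>{t..q}. E j) \<and> t < q) sequentially"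
    by (rule eventually_conj)
  then obtain q where "m - \<gamma> < prob (\<Union>j\<in>{t..q}. E j)" and "t < q"
    using eventually_happens'[OF sequentially_bot] by blast
  with initial_le show False by fastforce
qed

lemma prob_E_infty: "prob (E_infty E) = 1"
proof -
  have tail: "(\<Union>i\<in>{t..}. E i) \<in> events" for t using sets_E by auto
  have "AE x in M. x \<in> (\<Union>i\<in>{t..}. E i)" for t
    using AE_in_set_eq_1[OF tail] prob_tail_eq_1 by simp
  then have "AE x in M. x \<in> E_infty E"
    unfolding E_infty_def by (simp add: AE_all_countable)
  moreover have "E_infty E \<in> events" unfolding E_infty_def using tail by auto
  ultimately show ?thesis by (simp add: AE_in_set_eq_1)
qed

end

theorem theorem2:
  fixes M :: "'a measure" and E :: "nat \<Rightarrow> 'a set"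
    and S :: "nat \<Rightarrow> nat set" and C' c :: real
  assumes "prob_space M"
    and "\<And>i. E i \<in> sets M"
    and "C' > 0" and "c > 0"
    and "\<And>k. finite (S k)"
    and "filterlim (\<lambda>k. Min (S k)) at_top sequentially"
    and "eventually (\<lambda>k. (\<Sum>i\<in>S k. measure M (E i)) \<ge> c
            \<and> (\<Sum>(s, t)\<in>{(s, t). s \<in> S k \<and> t \<in> S k \<and> s < t}. measure M (E s \<inter> E t))
                \<le> C' * (\<Sum>i\<in>S k. measure M (E i))^2) sequentially"
    and "M1 M E"
  shows "measure M (E_infty E) = 1"
proof -
  interpret blockwise_second_moment M E S C' c
    using assms by (simp add: blockwise_second_moment_def blockwise_second_moment_axioms_def)
  show ?thesis by (rule prob_E_infty)
qed

end
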